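(* Let $n\ge1$, let $g=(g_{ij})$ be a nondegenerate symmetric complex $n\times n$ matrix with inverse $\eta=(\eta_{ij})=g^{-1}$, and let $(\alpha^{ij})$ be a symmetric complex $n\times n$ matrix. Consider the system of hydrodynamic type $$u^i_t=\big(\eta_{nj}u^ju^i+\alpha^{ij}\eta_{jk}u^k\big)_x,\qquad i=1,\dots,n,$$ (summation over repeated indices), written as $u^i_t=A^i_k(u)u^k_x$ with $A^i_k=\eta_{nj}u^j\delta^i_k+u^i\eta_{nk}+\alpha^{ij}\eta_{jk}$. Then the Haantjes tensor of $A=(A^i_k(u))$ vanishes identically.
   Context: Regard $A$ as a field of endomorphisms of the tangent bundle of $\mathbb{C}^n$ with coordinates $u=(u^1,\dots,u^n)$. Its Nijenhuis tensor is $N_A(X,Y)=[AX,AY]-A[X,AY]-A[AX,Y]+A^2[X,Y]$ (with $[\,,\,]$ the Lie bracket of vector fields), and its Haantjes tensor is $H_A(X,Y)=N_A(AX,AY)-AN_A(X,AY)-AN_A(AX,Y)+A^2N_A(X,Y)$. *)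

theory Defs
  imports "HOL-Analysis.Analysis"
begin

text \<open>Points of C^n are functions nat => complex; only coordinates 0..n-1 are used
  (0-based: paper index i corresponds to i-1).\<close>

type_synonym point = "nat \<Rightarrow> complex"
type_synonym vfield = "point \<Rightarrow> nat \<Rightarrow> complex"
type_synonym efield = "point \<Rightarrow> nat \<Rightarrow> nat \<Rightarrow> complex"

definition pd :: "nat \<Rightarrow> (point \<Rightarrow> complex) \<Rightarrow> point \<Rightarrow> complex" where
  "pd l f u = deriv (\<lambda>t. f (u(l := t))) (u l)"

definition admissible_vf :: "vfield \<Rightarrow> bool" where
  "admissible_vf X \<longleftrightarrow>
     (\<forall>u l i. (\<lambda>t. X (u(l := t)) i) field_differentiable (at (u l)))"

definition vapp :: "nat \<Rightarrow> efield \<Rightarrow> vfield \<Rightarrow> vfield" where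
  "vapp n A X = (\<lambda>u i. \<Sum>k<n. A u i k * X u k)"

definition lie :: "nat \<Rightarrow> vfield \<Rightarrow> vfield \<Rightarrow> vfield" where
  "lie n X Y = (\<lambda>u i. \<Sum>l<n. X u l * pd l (\<lambda>v. Y v i) u - Y u l * pd l (\<lambda>v. X v i) u)"

definition vadd :: "vfield \<Rightarrow> vfield \<Rightarrow> vfield" where
  "vadd X Y = (\<lambda>u i. X u i + Y u i)"

definition vsub :: "vfield \<Rightarrow> vfield \<Rightarrow> vfield" where
  "vsub X Y = (\<lambda>u i. X u i - Y u i)"

definition nijenhuis :: "nat \<Rightarrow> efield \<Rightarrow> vfield \<Rightarrow> vfield \<Rightarrow> vfield" where
  "nijenhuis n A X Y =
     vadd (vsub (vsub (lie n (vapp n A X) (vapp n A Y))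
                      (vapp n A (lie n X (vapp n A Y))))
                (vapp n A (lie n (vapp n A X) Y)))
          (vapp n A (vapp n A (lie n X Y)))"

definition haantjes :: "nat \<Rightarrow> efield \<Rightarrow> vfield \<Rightarrow> vfield \<Rightarrow> vfield" where
  "haantjes n A X Y =
     vadd (vsub (vsub (nijenhuis n A (vapp n A X) (vapp n A Y))
                      (vapp n A (nijenhuis n A X (vapp n A Y))))
                (vapp n A (nijenhuis n A (vapp n A X) Y)))
          (vapp n A (vapp n A (nijenhuis n A X Y)))"

text \<open>The matrix A^i_k(u) = eta_{nj} u^j delta^i_k + u^i eta_{nk} + alpha^{ij} eta_{jk},
  with the paper's index n being index n-1 here.\<close>
definition sysA :: "nat \<Rightarrow> (nat \<Rightarrow> nat \<Rightarrow> complex) \<Rightarrow> (nat \<Rightarrow> nat \<Rightarrow> complex) \<Rightarrow> efield" where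
  "sysA n eta alpha = (\<lambda>u i k.
     (\<Sum>j<n. eta (n - 1) j * u j) * (if i = k then 1 else 0)
     + u i * eta (n - 1) k + (\<Sum>j<n. alpha i j * eta j k))"

end

theory Submission
  imports Defs
begin

text \<open>Write \<open>D\<^sub>V\<close> for the directional derivative at a point. Since
  \<open>[X,Y] = D\<^sub>X Y - D\<^sub>Y X\<close> and \<open>D\<^sub>V (A Q) = A D\<^sub>V Q + (D\<^sub>V A) Q\<close>, all second-order and all
  \<open>D X\<close>, \<open>D Y\<close> terms cancel in the Nijenhuis tensor, leaving
  \<open>N(X,Y) = (D\<^sub>A\<^sub>X A) Y - (D\<^sub>A\<^sub>Y A) X - A (D\<^sub>X A) Y + A (D\<^sub>Y A) X\<close>.
  For the matrix of the system, \<open>A\<close> is affine in \<open>u\<close> with \<open>(D\<^sub>V A) q = w(V) q + w(q) V\<close>,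
  where \<open>w\<close> is the last row of \<open>\<eta>\<close>. Hence
  \<open>N(X,Y) = w(AX) Y - w(AY) X + w(Y) AX - w(X) AY\<close>, and for a tensor of this shape
  the Haantjes combination cancels term by term, for any matrix \<open>A\<close> and form \<open>w\<close>.\<close>

definition admissible_ef :: "efield \<Rightarrow> bool" where
  "admissible_ef A \<longleftrightarrow> (\<forall>u l i k. (\<lambda>t. A (u(l := t)) i k) field_differentiable (at (u l)))"

definition matvec :: "nat \<Rightarrow> (nat \<Rightarrow> nat \<Rightarrow> complex) \<Rightarrow> (nat \<Rightarrow> complex) \<Rightarrow> nat \<Rightarrow> complex" where
  "matvec n M x = (\<lambda>i. \<Sum>k<n. M i k * x k)"

definition lin_form :: "nat \<Rightarrow> (nat \<Rightarrow> complex) \<Rightarrow> (nat \<Rightarrow> complex) \<Rightarrow> complex" where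
  "lin_form n w V = (\<Sum>l<n. w l * V l)"

definition dir_deriv :: "nat \<Rightarrow> vfield \<Rightarrow> point \<Rightarrow> (nat \<Rightarrow> complex) \<Rightarrow> nat \<Rightarrow> complex" where
  "dir_deriv n Z u V = (\<lambda>i. \<Sum>l<n. V l * pd l (\<lambda>v. Z v i) u)"

definition dir_deriv_mat ::
    "nat \<Rightarrow> efield \<Rightarrow> point \<Rightarrow> (nat \<Rightarrow> complex) \<Rightarrow> (nat \<Rightarrow> complex) \<Rightarrow> nat \<Rightarrow> complex" where
  "dir_deriv_mat n A u V q = (\<lambda>i. \<Sum>l<n. V l * (\<Sum>k<n. pd l (\<lambda>v. A v i k) u * q k))"

lemma vapp_eq_matvec: "vapp n A Z u = matvec n (A u) (Z u)"
  by (simp add: vapp_def matvec_def)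

lemma matvec_add: "matvec n M (\<lambda>i. f i + g i) = (\<lambda>i. matvec n M f i + matvec n M g i)"
  by (simp add: matvec_def distrib_left sum.distrib)

lemma matvec_diff: "matvec n M (\<lambda>i. f i - g i) = (\<lambda>i. matvec n M f i - matvec n M g i)"
  by (simp add: matvec_def right_diff_distrib sum_subtractf)

lemma matvec_cmult: "matvec n M (\<lambda>i. c * f i) = (\<lambda>i. c * matvec n M f i)"
  by (simp add: matvec_def sum_distrib_left algebra_simps)

lemma matvec_cong: "(\<And>k. k < n \<Longrightarrow> f k = g k) \<Longrightarrow> matvec n M f = matvec n M g"
  by (simp add: matvec_def)

definition nijenhuis_model ::
    "nat \<Rightarrow> (nat \<Rightarrow> nat \<Rightarrow> complex) \<Rightarrow> (nat \<Rightarrow> complex) \<Rightarrow>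
     (nat \<Rightarrow> complex) \<Rightarrow> (nat \<Rightarrow> complex) \<Rightarrow> nat \<Rightarrow> complex" where
  "nijenhuis_model n M w V W = (\<lambda>i.
     lin_form n w (matvec n M V) * W i - lin_form n w (matvec n M W) * V i
     + lin_form n w W * matvec n M V i - lin_form n w V * matvec n M W i)"

lemma haantjes_comb_nijenhuis_model_eq_0:
  "nijenhuis_model n M w (matvec n M V) (matvec n M W) i
   - matvec n M (nijenhuis_model n M w V (matvec n M W)) i
   - matvec n M (nijenhuis_model n M w (matvec n M V) W) i
   + matvec n M (matvec n M (nijenhuis_model n M w V W)) i = 0"
  by (simp add: nijenhuis_model_def matvec_add matvec_diff matvec_cmult)

lemma pd_has_field_derivative:
  assumes "(\<lambda>t. f (u(l := t))) field_differentiable (at (u l))"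
  shows "((\<lambda>t. f (u(l := t))) has_field_derivative pd l f u) (at (u l))"
  using field_differentiable_derivI[OF assms] by (simp add: pd_def)

lemma pd_vapp:
  assumes A: "admissible_ef A" and Q: "admissible_vf Q"
  shows "pd l (\<lambda>v. vapp n A Q v i) u =
    (\<Sum>k<n. pd l (\<lambda>v. A v i k) u * Q u k + A u i k * pd l (\<lambda>v. Q v k) u)"
proof -
  have "((\<lambda>t. vapp n A Q (u(l := t)) i) has_field_derivative
      (\<Sum>k<n. pd l (\<lambda>v. A v i k) u * Q u k + A u i k * pd l (\<lambda>v. Q v k) u)) (at (u l))"
    unfolding vapp_def
  proof (rule DERIV_sum)
    fix k
    have a: "((\<lambda>t. A (u(l := t)) i k) has_field_derivative pd l (\<lambda>v. A v i k) u) (at (u l))"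
      using A by (intro pd_has_field_derivative) (simp add: admissible_ef_def)
    have q: "((\<lambda>t. Q (u(l := t)) k) has_field_derivative pd l (\<lambda>v. Q v k) u) (at (u l))"
      using Q by (intro pd_has_field_derivative) (simp add: admissible_vf_def)
    show "((\<lambda>t. A (u(l := t)) i k * Q (u(l := t)) k) has_field_derivative
        pd l (\<lambda>v. A v i k) u * Q u k + A u i k * pd l (\<lambda>v. Q v k) u) (at (u l))"
      using DERIV_mult[OF a q] by (simp add: algebra_simps)
  qed
  then show ?thesis by (simp add: pd_def DERIV_imp_deriv)
qed

lemma admissible_vf_vapp:
  assumes "admissible_ef A" and "admissible_vf Q"
  shows "admissible_vf (vapp n A Q)"
  using assms unfolding admissible_vf_def admissible_ef_def vapp_def
  by (intro allI field_differentiable_sum field_differentiable_mult) auto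

lemma lie_eq_dir_deriv: "lie n X Y u = (\<lambda>i. dir_deriv n Y u (X u) i - dir_deriv n X u (Y u) i)"
  by (simp add: lie_def dir_deriv_def sum_subtractf)

lemma dir_deriv_vapp:
  assumes A: "admissible_ef A" and Q: "admissible_vf Q"
  shows "dir_deriv n (vapp n A Q) u V =
    (\<lambda>i. matvec n (A u) (dir_deriv n Q u V) i + dir_deriv_mat n A u V (Q u) i)"
proof
  fix i
  have swap: "(\<Sum>l<n. \<Sum>k<n. A u i k * (V l * pd l (\<lambda>v. Q v k) u))
      = (\<Sum>k<n. \<Sum>l<n. A u i k * (V l * pd l (\<lambda>v. Q v k) u))"
    by (rule sum.swap)
  have "dir_deriv n (vapp n A Q) u V i =
      (\<Sum>l<n. \<Sum>k<n. V l * (pd l (\<lambda>v. A v i k) u * Q u k)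
                    + A u i k * (V l * pd l (\<lambda>v. Q v k) u))"
    by (simp add: dir_deriv_def pd_vapp[OF A Q] sum_distrib_left algebra_simps)
  also have "\<dots> = (\<Sum>l<n. \<Sum>k<n. V l * (pd l (\<lambda>v. A v i k) u * Q u k))
       + (\<Sum>l<n. \<Sum>k<n. A u i k * (V l * pd l (\<lambda>v. Q v k) u))"
    by (simp only: sum.distrib)
  also have "\<dots> = matvec n (A u) (dir_deriv n Q u V) i + dir_deriv_mat n A u V (Q u) i"
    by (simp add: matvec_def dir_deriv_def dir_deriv_mat_def sum_distrib_left swap)
  finally show "dir_deriv n (vapp n A Q) u V i =
      matvec n (A u) (dir_deriv n Q u V) i + dir_deriv_mat n A u V (Q u) i" .
qed

lemma nijenhuis_eq_dir_deriv_mat: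
  assumes A: "admissible_ef A" and X: "admissible_vf X" and Y: "admissible_vf Y"
  shows "nijenhuis n A X Y u = (\<lambda>i.
      dir_deriv_mat n A u (matvec n (A u) (X u)) (Y u) i
    - dir_deriv_mat n A u (matvec n (A u) (Y u)) (X u) i
    - matvec n (A u) (dir_deriv_mat n A u (X u) (Y u)) i
    + matvec n (A u) (dir_deriv_mat n A u (Y u) (X u)) i)"
  by (simp add: nijenhuis_def vadd_def vsub_def vapp_eq_matvec lie_eq_dir_deriv
      dir_deriv_vapp A X Y admissible_vf_vapp matvec_add matvec_diff algebra_simps)

lemma has_field_derivative_coordinate:
  "((\<lambda>t. (u(l := t)) j) has_field_derivative (if j = l then 1 else 0)) (at x)"
  by (cases "j = l") (auto intro!: derivative_eq_intros)

lemma sysA_has_field_derivative: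
  "((\<lambda>t. sysA n eta alpha (u(l := t)) i k) has_field_derivative
     (\<Sum>j<n. eta (n - 1) j * (if j = l then 1 else 0)) * (if i = k then 1 else 0)
     + (if i = l then 1 else 0) * eta (n - 1) k) (at x)"
proof -
  have "((\<lambda>t. \<Sum>j<n. eta (n - 1) j * (u(l := t)) j) has_field_derivative
     (\<Sum>j<n. eta (n - 1) j * (if j = l then 1 else 0))) (at x)"
    by (intro DERIV_sum DERIV_cmult has_field_derivative_coordinate)
  then have "((\<lambda>t. (\<Sum>j<n. eta (n - 1) j * (u(l := t)) j) * (if i = k then 1 else 0)
     + (u(l := t)) i * eta (n - 1) k + (\<Sum>j<n. alpha i j * eta j k)) has_field_derivative
     (\<Sum>j<n. eta (n - 1) j * (if j = l then 1 else 0)) * (if i = k then 1 else 0)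
     + (if i = l then 1 else 0) * eta (n - 1) k + 0) (at x)"
    by (intro DERIV_add DERIV_cmult_right has_field_derivative_coordinate DERIV_const)
  then show ?thesis unfolding sysA_def by simp
qed

lemma admissible_ef_sysA: "admissible_ef (sysA n eta alpha)"
  unfolding admissible_ef_def field_differentiable_def using sysA_has_field_derivative by blast

lemma pd_sysA:
  assumes "l < n"
  shows "pd l (\<lambda>v. sysA n eta alpha v i k) u =
     eta (n - 1) l * (if i = k then 1 else 0) + (if i = l then eta (n - 1) k else 0)"
proof -
  have "pd l (\<lambda>v. sysA n eta alpha v i k) u =
      (\<Sum>j<n. eta (n - 1) j * (if j = l then 1 else 0)) * (if i = k then 1 else 0)
      + (if i = l then 1 else 0) * eta (n - 1) k"
    unfolding pd_def by (rule DERIV_imp_deriv[OF sysA_has_field_derivative])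
  also have "(\<Sum>j<n. eta (n - 1) j * (if j = l then 1 else 0)) = eta (n - 1) l"
    using assms by (simp add: if_distrib cong: if_cong)
  finally show ?thesis by simp
qed

text \<open>Only for \<open>i < n\<close>: the left-hand side vanishes at the unused indices \<open>i \<ge> n\<close>.\<close>
lemma dir_deriv_mat_sysA:
  assumes "i < n"
  shows "dir_deriv_mat n (sysA n eta alpha) u V q i =
    lin_form n (eta (n - 1)) V * q i + lin_form n (eta (n - 1)) q * V i"
proof -
  let ?w = "lin_form n (eta (n - 1))"
  have inner: "(\<Sum>k<n. pd l (\<lambda>v. sysA n eta alpha v i k) u * q k)
      = eta (n - 1) l * q i + (if i = l then ?w q else 0)" if "l < n" for l
  proof -
    have "(\<Sum>k<n. pd l (\<lambda>v. sysA n eta alpha v i k) u * q k)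
      = (\<Sum>k<n. (if k = i then eta (n - 1) l * q k else 0)
               + (if i = l then eta (n - 1) k * q k else 0))"
      by (intro sum.cong refl) (auto simp: pd_sysA that)
    then show ?thesis
      using assms by (simp add: sum.distrib lin_form_def)
  qed
  have "dir_deriv_mat n (sysA n eta alpha) u V q i =
      (\<Sum>l<n. V l * (eta (n - 1) l * q i + (if i = l then ?w q else 0)))"
    unfolding dir_deriv_mat_def by (intro sum.cong refl) (simp add: inner)
  also have "\<dots> = (\<Sum>l<n. (eta (n - 1) l * V l) * q i + (if l = i then ?w q * V l else 0))"
    by (intro sum.cong refl) (auto simp: algebra_simps)
  finally show ?thesis
    using assms by (simp add: sum.distrib lin_form_def sum_distrib_right)
qed

lemma matvec_dir_deriv_mat_sysA:
  "matvec n M (dir_deriv_mat n (sysA n eta alpha) u V q) = (\<lambda>i.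
     lin_form n (eta (n - 1)) V * matvec n M q i + lin_form n (eta (n - 1)) q * matvec n M V i)"
proof -
  have "matvec n M (dir_deriv_mat n (sysA n eta alpha) u V q) =
      matvec n M (\<lambda>i. lin_form n (eta (n - 1)) V * q i + lin_form n (eta (n - 1)) q * V i)"
    by (rule matvec_cong) (simp add: dir_deriv_mat_sysA)
  then show ?thesis by (simp add: matvec_add matvec_cmult)
qed

lemma nijenhuis_sysA:
  assumes "admissible_vf X" and "admissible_vf Y" and "i < n"
  shows "nijenhuis n (sysA n eta alpha) X Y u i =
    nijenhuis_model n (sysA n eta alpha u) (eta (n - 1)) (X u) (Y u) i"
  using assms
  by (simp add: nijenhuis_eq_dir_deriv_mat admissible_ef_sysA dir_deriv_mat_sysA
      matvec_dir_deriv_mat_sysA nijenhuis_model_def algebra_simps)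

theorem proposition7p1:
  fixes n :: nat and g eta alpha :: "nat \<Rightarrow> nat \<Rightarrow> complex"
  assumes "n \<ge> 1"
    and "\<forall>i<n. \<forall>j<n. g i j = g j i"
    and "\<forall>i<n. \<forall>k<n. (\<Sum>j<n. g i j * eta j k) = (if i = k then 1 else 0)"
    and "\<forall>i<n. \<forall>k<n. (\<Sum>j<n. eta i j * g j k) = (if i = k then 1 else 0)"
    and "\<forall>i<n. \<forall>j<n. alpha i j = alpha j i"
    and X: "admissible_vf X" and Y: "admissible_vf Y"
  shows "\<forall>u. \<forall>i<n. haantjes n (sysA n eta alpha) X Y u i = 0"
proof (intro allI impI)
  fix u i assume "i < n"
  let ?A = "sysA n eta alpha"
  let ?N = "nijenhuis_model n (?A u) (eta (n - 1))"
  have AX: "admissible_vf (vapp n ?A X)" and AY: "admissible_vf (vapp n ?A Y)"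
    using X Y by (simp_all add: admissible_vf_vapp admissible_ef_sysA)
  have matvec_N: "matvec n (?A u) (nijenhuis n ?A V W u) = matvec n (?A u) (?N (V u) (W u))"
    if "admissible_vf V" "admissible_vf W" for V W
    using that by (intro matvec_cong) (simp add: nijenhuis_sysA)
  have "haantjes n ?A X Y u i =
      ?N (matvec n (?A u) (X u)) (matvec n (?A u) (Y u)) i
    - matvec n (?A u) (?N (X u) (matvec n (?A u) (Y u))) i
    - matvec n (?A u) (?N (matvec n (?A u) (X u)) (Y u)) i
    + matvec n (?A u) (matvec n (?A u) (?N (X u) (Y u))) i"
    using \<open>i < n\<close>
    by (simp add: haantjes_def vadd_def vsub_def vapp_eq_matvec nijenhuis_sysA AX AY X Y
        matvec_N[OF X AY] matvec_N[OF AX Y] matvec_N[OF X Y])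
  then show "haantjes n ?A X Y u i = 0"
    by (simp only: haantjes_comb_nijenhuis_model_eq_0)
qed

end
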